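(* Assume $-1\in\mathbb F^2$ and let $J=JCK(Z,\delta)$. On $\mathcal A=\mathrm{Der}(J)^{[\bar1,\bar1]}$ define the multiplication $X\cdot Y=-\tau\bigl([\varphi(X),\varphi^2(Y)]\bigr)$ and the map $\bar X=-\tau(X)$, where $S_4$ acts on $\mathrm{Der}(J)$ by conjugation ($\sigma(X)=\sigma X\sigma^{-1}$) and $[\,,]$ is the supercommutator. Then $\bar X=X$ for all $X\in\mathcal A$, and the superalgebra $(\mathcal A,\cdot)$ is isomorphic to the Jordan superalgebra $K=Z\oplus Zy$ (a subalgebra of $J$); explicitly, $\Phi:K\to\mathcal A$, $f+gy\mapsto D(v_1,fv_2)+\sqrt{-1}\,D(v_3,gy)$ ($f,g\in Z$) is an isomorphism of superalgebras. Thus $(\mathcal A,\cdot,\bar{\ })$ is isomorphic to $K$ with the trivial involution.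
   Context: Let $\mathbb F$ be a field of characteristic $\neq 2$ with $-1\in\mathbb F^2$, $Z$ a unital commutative associative $\mathbb F$-algebra, and $\delta$ a derivation of $Z$ such that $Z\delta(Z)=Z$ (the $\mathbb F$-span of all products $f\delta(g)$, $f,g\in Z$, is $Z$). The Cheng-Kac Jordan superalgebra $J=JCK(Z,\delta)=J_{\bar0}\oplus J_{\bar1}$ is defined as follows: $J_{\bar0}=Z1\oplus Zw_1\oplus Zw_2\oplus Zw_3$ and $J_{\bar1}=Zx\oplus Zx_1\oplus Zx_2\oplus Zx_3$ are free $Z$-modules of rank 4; $J_{\bar0}$ is the $Z$-algebra $(\mathbb F1\oplus\mathbb Fw_1\oplus\mathbb Fw_2\oplus\mathbb Fw_3)\otimes_{\mathbb F}Z$ with $1$ the identity, $w_1^2=w_2^2=1$, $w_3^2=-1$, $w_iw_j=0$ for $i\ne j$. For $f,g\in Z$ and $i,j\in\{1,2,3\}$ the remaining products are: $f(gx)=(fg)x$, $f(gx_j)=(fg)x_j$, $(fw_i)(gx)=(\delta(f)g)x_i$, $(fw_i)(gx_j)=-(fg)x_{i\times j}$, $(fx)(gx)=\delta(f)g-f\delta(g)$, $(fx)(gx_j)=-(fg)w_j$, $(fx_i)(gx)=(fg)w_i$, $(fx_i)(gx_j)=0$, extended by supercommutativity ($ab=(-1)^{|a||b|}ba$), where $x_{1\times2}=-x_{2\times1}=x_3$, $x_{1\times3}=-x_{3\times1}=x_2$, $x_{3\times2}=-x_{2\times3}=x_1$, $x_{i\times i}=0$. $J$ is $\mathbb Z_2^2$-graded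 by $J^{[\bar0,\bar0]}=Z\oplus Zx$, $J^{[\bar1,\bar0]}=Zw_1\oplus Zx_1$, $J^{[\bar0,\bar1]}=Zw_2\oplus Zx_2$, $J^{[\bar1,\bar1]}=Zw_3\oplus Zx_3$, and $\mathrm{Der}(J)^{\alpha}$ denotes the (super) derivations mapping each $J^{\beta}$ into $J^{\alpha+\beta}$. $D(a,b)$ is $c\mapsto a(bc)-(-1)^{|a||b|}b(ac)$. Fix $\sqrt{-1}\in\mathbb F$ and set $v_1=\sqrt{-1}w_1$, $v_2=\sqrt{-1}w_2$, $v_3=w_3$, $y=x$, $y_1=\sqrt{-1}x_1$, $y_2=\sqrt{-1}x_2$, $y_3=x_3$. $S_4$ acts on $J$ by automorphisms via: $(1\,2)(3\,4)$ is the identity on $J^{[\bar0,\bar0]}\oplus J^{[\bar1,\bar1]}$ and $-1$ on $J^{[\bar1,\bar0]}\oplus J^{[\bar0,\bar1]}$; $(2\,3)(4\,1)$ is the identity on $J^{[\bar0,\bar0]}\oplus J^{[\bar1,\bar0]}$ and $-1$ on $J^{[\bar0,\bar1]}\oplus J^{[\bar1,\bar1]}$; $\varphi=(1\,2\,3)$ is $Z$-linear with $1\mapsto1$, $y\mapsto y$, $v_i\mapsto v_{i+1}$, $y_i\mapsto y_{i+1}$ (indices mod 3); $\tau=(1\,2)$ is $Z$-linear with $1\mapsto1$, $y\mapsto y$, $v_1\mapsto -v_2$, $v_2\mapsto-v_1$, $v_3\mapsto-v_3$, $y_1\mapsto-y_2$, $y_2\mapsto-y_1$, $y_3\mapsto-y_3$.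 *)

theory Defs
  imports Main
begin

text \<open>
  The field F is a type 'f, the algebra Z is a type 'z :: comm_ring_1, and the
  F-algebra structure of Z is given by a unital ring homomorphism iota : F -> Z
  (scalar multiplication c.z = iota c * z).  An element of J is stored by its eight
  Z-coordinates with respect to the Z-basis 1, w1, w2, w3 (even part) and x, x1, x2, x3
  (odd part): J c0 c1 c2 c3 d0 d1 d2 d3 = c0 1 + c1 w1 + c2 w2 + c3 w3 + d0 x + d1 x1 + d2 x2 + d3 x3.
\<close>

datatype 'z J = J (c0: 'z) (c1: 'z) (c2: 'z) (c3: 'z) (d0: 'z) (d1: 'z) (d2: 'z) (d3: 'z)

instantiation J :: (ab_group_add) ab_group_add
begin
definition zero_J_def: "0 = J 0 0 0 0 0 0 0 0"
definition plus_J_def: "a + b = J (c0 a + c0 b) (c1 a + c1 b) (c2 a + c2 b) (c3 a + c3 b)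
                                 (d0 a + d0 b) (d1 a + d1 b) (d2 a + d2 b) (d3 a + d3 b)"
definition uminus_J_def: "- a = J (- c0 a) (- c1 a) (- c2 a) (- c3 a) (- d0 a) (- d1 a) (- d2 a) (- d3 a)"
definition minus_J_def: "a - b = J (c0 a - c0 b) (c1 a - c1 b) (c2 a - c2 b) (c3 a - c3 b)
                                 (d0 a - d0 b) (d1 a - d1 b) (d2 a - d2 b) (d3 a - d3 b)"
instance
  by standard (simp_all add: zero_J_def plus_J_def uminus_J_def minus_J_def algebra_simps)
end

definition zs :: "'z::comm_ring_1 \<Rightarrow> 'z J \<Rightarrow> 'z J" where
  "zs z a = J (z * c0 a) (z * c1 a) (z * c2 a) (z * c3 a) (z * d0 a) (z * d1 a) (z * d2 a) (z * d3 a)"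

text \<open>The product of J, obtained by bilinear extension of the multiplication table
  (w_i^2 = 1 (i=1,2), w_3^2 = -1, w_i w_j = 0 (i /= j), (f w_i)(g x) = (delta f g) x_i,
  (f w_i)(g x_j) = -(fg) x_{i x j}, (fx)(gx) = delta f g - f delta g, (fx)(g x_j) = -(fg) w_j,
  (f x_i)(g x) = (fg) w_i, (f x_i)(g x_j) = 0, supercommutativity).\<close>
definition jmul :: "('z::comm_ring_1 \<Rightarrow> 'z) \<Rightarrow> 'z J \<Rightarrow> 'z J \<Rightarrow> 'z J" where
  "jmul \<delta> a b = J
     \<comment> \<open>coefficient of 1: even*even plus odd*odd\<close>
     (c0 a * c0 b + c1 a * c1 b + c2 a * c2 b - c3 a * c3 b
        + (\<delta> (d0 a) * d0 b - d0 a * \<delta> (d0 b)))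
     \<comment> \<open>coefficients of w1, w2, w3\<close>
     (c0 a * c1 b + c1 a * c0 b - d0 a * d1 b + d1 a * d0 b)
     (c0 a * c2 b + c2 a * c0 b - d0 a * d2 b + d2 a * d0 b)
     (c0 a * c3 b + c3 a * c0 b - d0 a * d3 b + d3 a * d0 b)
     \<comment> \<open>coefficient of x: (even a)(odd b) + (odd a)(even b)\<close>
     (c0 a * d0 b + c0 b * d0 a)
     \<comment> \<open>coefficients of x1, x2, x3\<close>
     (c0 a * d1 b + \<delta> (c1 a) * d0 b - c3 a * d2 b + c2 a * d3 b
      + c0 b * d1 a + \<delta> (c1 b) * d0 a - c3 b * d2 a + c2 b * d3 a)
     (c0 a * d2 b + \<delta> (c2 a) * d0 b - c1 a * d3 b + c3 a * d1 b
      + c0 b * d2 a + \<delta> (c2 b) * d0 a - c1 b * d3 a + c3 b * d1 a)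
     (c0 a * d3 b + \<delta> (c3 a) * d0 b - c1 a * d2 b + c2 a * d1 b
      + c0 b * d3 a + \<delta> (c3 b) * d0 a - c1 b * d2 a + c2 b * d1 a)"

definition evp :: "'z::zero J \<Rightarrow> 'z J" where
  "evp a = J (c0 a) (c1 a) (c2 a) (c3 a) 0 0 0 0"
definition odp :: "'z::zero J \<Rightarrow> 'z J" where
  "odp a = J 0 0 0 0 (d0 a) (d1 a) (d2 a) (d3 a)"

definition Jev :: "'z::zero J set" where "Jev = {a. odp a = J 0 0 0 0 0 0 0 0}"
definition Jod :: "'z::zero J set" where "Jod = {a. evp a = J 0 0 0 0 0 0 0 0}"

text \<open>Parity of a homogeneous element (True = odd); 0 counts as even.\<close>
definition par :: "'z::zero J \<Rightarrow> bool" where "par a = (a \<notin> Jev)"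

text \<open>Z_2^2-grading; degrees are pairs of booleans (True = 1bar).  Degree [0,0]: 1, x;
  [1,0]: w1, x1; [0,1]: w2, x2; [1,1]: w3, x3.\<close>
definition gadd :: "bool \<times> bool \<Rightarrow> bool \<times> bool \<Rightarrow> bool \<times> bool" where
  "gadd \<alpha> \<beta> = (fst \<alpha> \<noteq> fst \<beta>, snd \<alpha> \<noteq> snd \<beta>)"

definition gproj :: "bool \<times> bool \<Rightarrow> 'z::zero J \<Rightarrow> 'z J" where
  "gproj \<alpha> a = J (if \<alpha> = (False, False) then c0 a else 0) (if \<alpha> = (True, False) then c1 a else 0)
                  (if \<alpha> = (False, True) then c2 a else 0) (if \<alpha> = (True, True) then c3 a else 0)
                  (if \<alpha> = (False, False) then d0 a else 0) (if \<alpha> = (True, False) then d1 a else 0)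
                  (if \<alpha> = (False, True) then d2 a else 0) (if \<alpha> = (True, True) then d3 a else 0)"

definition Jg :: "bool \<times> bool \<Rightarrow> 'z::zero J set" where "Jg \<alpha> = {a. gproj \<alpha> a = a}"

definition Flin :: "('f \<Rightarrow> 'z::comm_ring_1) \<Rightarrow> ('z J \<Rightarrow> 'z J) \<Rightarrow> bool" where
  "Flin \<iota> X \<longleftrightarrow> (\<forall>a b. X (a + b) = X a + X b) \<and> (\<forall>c a. X (zs (\<iota> c) a) = zs (\<iota> c) (X a))"

definition sder :: "('f \<Rightarrow> 'z::comm_ring_1) \<Rightarrow> ('z \<Rightarrow> 'z) \<Rightarrow> bool \<Rightarrow> ('z J \<Rightarrow> 'z J) \<Rightarrow> bool" where
  "sder \<iota> \<delta> p X \<longleftrightarrow> Flin \<iota> X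
     \<and> X ` Jev \<subseteq> (if p then Jod else Jev) \<and> X ` Jod \<subseteq> (if p then Jev else Jod)
     \<and> (\<forall>a b. a \<in> Jev \<union> Jod \<longrightarrow>
          X (jmul \<delta> a b) = jmul \<delta> (X a) b
             + (if p \<and> par a then - jmul \<delta> a (X b) else jmul \<delta> a (X b)))"

definition Der :: "('f \<Rightarrow> 'z::comm_ring_1) \<Rightarrow> ('z \<Rightarrow> 'z) \<Rightarrow> ('z J \<Rightarrow> 'z J) set" where
  "Der \<iota> \<delta> = {X. \<exists>X0 X1. sder \<iota> \<delta> False X0 \<and> sder \<iota> \<delta> True X1 \<and> X = (\<lambda>a. X0 a + X1 a)}"

definition DerG :: "('f \<Rightarrow> 'z::comm_ring_1) \<Rightarrow> ('z \<Rightarrow> 'z) \<Rightarrow> bool \<times> bool \<Rightarrow> ('z J \<Rightarrow> 'z J) set" where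
  "DerG \<iota> \<delta> \<alpha> = {X \<in> Der \<iota> \<delta>. \<forall>\<beta>. X ` Jg \<beta> \<subseteq> Jg (gadd \<alpha> \<beta>)}"

text \<open>Even / odd components of a linear map and the supercommutator (bilinear extension).\<close>
definition evm :: "('z::ab_group_add J \<Rightarrow> 'z J) \<Rightarrow> 'z J \<Rightarrow> 'z J" where
  "evm X a = evp (X (evp a)) + odp (X (odp a))"
definition odm :: "('z::ab_group_add J \<Rightarrow> 'z J) \<Rightarrow> 'z J \<Rightarrow> 'z J" where
  "odm X a = odp (X (evp a)) + evp (X (odp a))"

definition scom :: "('z::ab_group_add J \<Rightarrow> 'z J) \<Rightarrow> ('z J \<Rightarrow> 'z J) \<Rightarrow> 'z J \<Rightarrow> 'z J" where
  "scom X Y a =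
      (evm X (evm Y a) - evm Y (evm X a)) + (evm X (odm Y a) - odm Y (evm X a))
    + (odm X (evm Y a) - evm Y (odm X a)) + (odm X (odm Y a) + odm Y (odm X a))"

definition one :: "'z::comm_ring_1 J" where "one = J 1 0 0 0 0 0 0 0"
definition yy :: "'z::comm_ring_1 J" where "yy = J 0 0 0 0 1 0 0 0"
definition v1 :: "('f \<Rightarrow> 'z::comm_ring_1) \<Rightarrow> 'f \<Rightarrow> 'z J" where "v1 \<iota> i = J 0 (\<iota> i) 0 0 0 0 0 0"
definition v2 :: "('f \<Rightarrow> 'z::comm_ring_1) \<Rightarrow> 'f \<Rightarrow> 'z J" where "v2 \<iota> i = J 0 0 (\<iota> i) 0 0 0 0 0"
definition v3 :: "'z::comm_ring_1 J" where "v3 = J 0 0 0 1 0 0 0 0"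
definition y1 :: "('f \<Rightarrow> 'z::comm_ring_1) \<Rightarrow> 'f \<Rightarrow> 'z J" where "y1 \<iota> i = J 0 0 0 0 0 (\<iota> i) 0 0"
definition y2 :: "('f \<Rightarrow> 'z::comm_ring_1) \<Rightarrow> 'f \<Rightarrow> 'z J" where "y2 \<iota> i = J 0 0 0 0 0 0 (\<iota> i) 0"
definition y3 :: "'z::comm_ring_1 J" where "y3 = J 0 0 0 0 0 0 0 1"

text \<open>Coordinates w.r.t. the Z-basis 1, v1, v2, v3, y, y1, y2, y3
  (since i^2 = -1: w_k = -i v_k, x_k = -i y_k for k = 1,2; w3 = v3, x3 = y3).\<close>
definition phi :: "('f \<Rightarrow> 'z::comm_ring_1) \<Rightarrow> 'f \<Rightarrow> 'z J \<Rightarrow> 'z J" where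
  "phi \<iota> i a = zs (c0 a) one + zs (d0 a) yy
     + zs (- \<iota> i * c1 a) (v2 \<iota> i) + zs (- \<iota> i * c2 a) v3 + zs (c3 a) (v1 \<iota> i)
     + zs (- \<iota> i * d1 a) (y2 \<iota> i) + zs (- \<iota> i * d2 a) y3 + zs (d3 a) (y1 \<iota> i)"

definition tau :: "('f \<Rightarrow> 'z::comm_ring_1) \<Rightarrow> 'f \<Rightarrow> 'z J \<Rightarrow> 'z J" where
  "tau \<iota> i a = zs (c0 a) one + zs (d0 a) yy
     - zs (- \<iota> i * c1 a) (v2 \<iota> i) - zs (- \<iota> i * c2 a) (v1 \<iota> i) - zs (c3 a) v3
     - zs (- \<iota> i * d1 a) (y2 \<iota> i) - zs (- \<iota> i * d2 a) (y1 \<iota> i) - zs (d3 a) y3"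

definition conj :: "('a \<Rightarrow> 'a) \<Rightarrow> ('a \<Rightarrow> 'a) \<Rightarrow> 'a \<Rightarrow> 'a" where
  "conj \<sigma> X = \<sigma> \<circ> X \<circ> inv \<sigma>"

definition Aset :: "('f \<Rightarrow> 'z::comm_ring_1) \<Rightarrow> ('z \<Rightarrow> 'z) \<Rightarrow> ('z J \<Rightarrow> 'z J) set" where
  "Aset \<iota> \<delta> = DerG \<iota> \<delta> (True, True)"

definition Amul :: "('f \<Rightarrow> 'z::comm_ring_1) \<Rightarrow> 'f \<Rightarrow> ('z J \<Rightarrow> 'z J) \<Rightarrow> ('z J \<Rightarrow> 'z J) \<Rightarrow> 'z J \<Rightarrow> 'z J" where
  "Amul \<iota> i X Y = (\<lambda>a. - conj (tau \<iota> i) (scom (conj (phi \<iota> i) X) (conj (phi \<iota> i \<circ> phi \<iota> i) Y)) a)"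

definition Abar :: "('f \<Rightarrow> 'z::comm_ring_1) \<Rightarrow> 'f \<Rightarrow> ('z J \<Rightarrow> 'z J) \<Rightarrow> 'z J \<Rightarrow> 'z J" where
  "Abar \<iota> i X = (\<lambda>a. - conj (tau \<iota> i) X a)"

definition Kset :: "'z::comm_ring_1 J set" where
  "Kset = {a. \<exists>f g. a = zs f one + zs g yy}"

definition Dop :: "('z::comm_ring_1 \<Rightarrow> 'z) \<Rightarrow> 'z J \<Rightarrow> 'z J \<Rightarrow> 'z J \<Rightarrow> 'z J" where
  "Dop \<delta> a b c = (if par a \<and> par b then jmul \<delta> a (jmul \<delta> b c) + jmul \<delta> b (jmul \<delta> a c)
                  else jmul \<delta> a (jmul \<delta> b c) - jmul \<delta> b (jmul \<delta> a c))"

definition Phi :: "('f \<Rightarrow> 'z::comm_ring_1) \<Rightarrow> ('z \<Rightarrow> 'z) \<Rightarrow> 'f \<Rightarrow> 'z J \<Rightarrow> 'z J \<Rightarrow> 'z J" where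
  "Phi \<iota> \<delta> i k = (\<lambda>c. Dop \<delta> (v1 \<iota> i) (zs (c0 k) (v2 \<iota> i)) c
                     + zs (\<iota> i) (Dop \<delta> v3 (zs (d0 k) yy) c))"

end

theory Submission
  imports Defs
begin

(* The algebra A = Der(J)^[1,1] is computed explicitly:
   (1) For m, s in Z the maps derE m (even) and derO s (odd), given by explicit coordinate
       formulas, are superderivations of J of degree [1,1]; derE f = D(v1, f v2) and
       derO (sqrt(-1) g) = sqrt(-1) D(v3, g y).
   (2) Conversely, an even (odd) superderivation of degree [1,1] is determined by its value on
       w1 (on x3): grading and parity fix the shape of its value on each basis element, and the
       Leibniz rule on a few products of basis elements leaves only one free coefficient.
       Splitting a graded derivation into its even and odd part gives
       A = {derE m + derO s | m, s in Z}.
   (3) The automorphisms phi = (1 2 3) and tau = (1 2) permute the coordinates up to signs and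
       factors sqrt(-1), so the involution and the product of A can be evaluated on this normal
       form: the involution is the identity and derE, derO multiply like f and g y in K.
   (4) Phi (f + g y) = derE f + derO (sqrt(-1) g), so Phi is a graded linear bijection K -> A
       that respects the products. *)

section \<open>Coordinates in J\<close>

lemma J_eq_iff: "(a::'z J) = b \<longleftrightarrow> c0 a = c0 b \<and> c1 a = c1 b \<and> c2 a = c2 b \<and> c3 a = c3 b
   \<and> d0 a = d0 b \<and> d1 a = d1 b \<and> d2 a = d2 b \<and> d3 a = d3 b"
  by (cases a; cases b) auto

lemma J_sel_simps [simp]:
  "c0 (a + b) = c0 a + c0 b" "c1 (a + b) = c1 a + c1 b" "c2 (a + b) = c2 a + c2 b" "c3 (a + b) = c3 a + c3 b"
  "d0 (a + b) = d0 a + d0 b" "d1 (a + b) = d1 a + d1 b" "d2 (a + b) = d2 a + d2 b" "d3 (a + b) = d3 a + d3 b"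
  "c0 (a - b) = c0 a - c0 b" "c1 (a - b) = c1 a - c1 b" "c2 (a - b) = c2 a - c2 b" "c3 (a - b) = c3 a - c3 b"
  "d0 (a - b) = d0 a - d0 b" "d1 (a - b) = d1 a - d1 b" "d2 (a - b) = d2 a - d2 b" "d3 (a - b) = d3 a - d3 b"
  "c0 (- a) = - c0 a" "c1 (- a) = - c1 a" "c2 (- a) = - c2 a" "c3 (- a) = - c3 a"
  "d0 (- a) = - d0 a" "d1 (- a) = - d1 a" "d2 (- a) = - d2 a" "d3 (- a) = - d3 a"
  "c0 0 = 0" "c1 0 = 0" "c2 0 = 0" "c3 0 = 0" "d0 0 = 0" "d1 0 = 0" "d2 0 = 0" "d3 0 = 0"
  for a b :: "'z::ab_group_add J"
  by (simp_all add: plus_J_def minus_J_def uminus_J_def zero_J_def)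

lemma zs_sel [simp]:
  "c0 (zs z a) = z * c0 a" "c1 (zs z a) = z * c1 a" "c2 (zs z a) = z * c2 a" "c3 (zs z a) = z * c3 a"
  "d0 (zs z a) = z * d0 a" "d1 (zs z a) = z * d1 a" "d2 (zs z a) = z * d2 a" "d3 (zs z a) = z * d3 a"
  by (simp_all add: zs_def)

lemma zs_one: "zs 1 a = a"
  by (simp add: J_eq_iff)

lemma jmul_sel:
  "c0 (jmul \<delta> a b) = c0 a * c0 b + c1 a * c1 b + c2 a * c2 b - c3 a * c3 b
        + (\<delta> (d0 a) * d0 b - d0 a * \<delta> (d0 b))"
  "c1 (jmul \<delta> a b) = c0 a * c1 b + c1 a * c0 b - d0 a * d1 b + d1 a * d0 b"
  "c2 (jmul \<delta> a b) = c0 a * c2 b + c2 a * c0 b - d0 a * d2 b + d2 a * d0 b"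
  "c3 (jmul \<delta> a b) = c0 a * c3 b + c3 a * c0 b - d0 a * d3 b + d3 a * d0 b"
  "d0 (jmul \<delta> a b) = c0 a * d0 b + c0 b * d0 a"
  "d1 (jmul \<delta> a b) = c0 a * d1 b + \<delta> (c1 a) * d0 b - c3 a * d2 b + c2 a * d3 b
      + c0 b * d1 a + \<delta> (c1 b) * d0 a - c3 b * d2 a + c2 b * d3 a"
  "d2 (jmul \<delta> a b) = c0 a * d2 b + \<delta> (c2 a) * d0 b - c1 a * d3 b + c3 a * d1 b
      + c0 b * d2 a + \<delta> (c2 b) * d0 a - c1 b * d3 a + c3 b * d1 a"
  "d3 (jmul \<delta> a b) = c0 a * d3 b + \<delta> (c3 a) * d0 b - c1 a * d2 b + c2 a * d1 b
      + c0 b * d3 a + \<delta> (c3 b) * d0 a - c1 b * d2 a + c2 b * d1 a"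
  by (simp_all add: jmul_def)

definition bw1 :: "'z::comm_ring_1 J" where "bw1 = J 0 1 0 0 0 0 0 0"
definition bw2 :: "'z::comm_ring_1 J" where "bw2 = J 0 0 1 0 0 0 0 0"
definition bw3 :: "'z::comm_ring_1 J" where "bw3 = J 0 0 0 1 0 0 0 0"
definition bx :: "'z::comm_ring_1 J" where "bx = J 0 0 0 0 1 0 0 0"
definition bx1 :: "'z::comm_ring_1 J" where "bx1 = J 0 0 0 0 0 1 0 0"
definition bx2 :: "'z::comm_ring_1 J" where "bx2 = J 0 0 0 0 0 0 1 0"
definition bx3 :: "'z::comm_ring_1 J" where "bx3 = J 0 0 0 0 0 0 0 1"

lemmas basis_defs = one_def bw1_def bw2_def bw3_def bx_def bx1_def bx2_def bx3_def

lemma J_decomp: "c = zs (c0 c) one + zs (c1 c) bw1 + zs (c2 c) bw2 + zs (c3 c) bw3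
   + zs (d0 c) bx + zs (d1 c) bx1 + zs (d2 c) bx2 + zs (d3 c) bx3"
  by (simp add: J_eq_iff basis_defs)

lemma Jev_iff: "a \<in> Jev \<longleftrightarrow> d0 a = 0 \<and> d1 a = 0 \<and> d2 a = 0 \<and> d3 a = 0"
  by (cases a) (simp add: Jev_def odp_def)

lemma Jod_iff: "a \<in> Jod \<longleftrightarrow> c0 a = 0 \<and> c1 a = 0 \<and> c2 a = 0 \<and> c3 a = 0"
  by (cases a) (simp add: Jod_def evp_def)

lemma Jg_iff: "a \<in> Jg \<gamma> \<longleftrightarrow> (\<gamma> \<noteq> (False,False) \<longrightarrow> c0 a = 0 \<and> d0 a = 0)
   \<and> (\<gamma> \<noteq> (True,False) \<longrightarrow> c1 a = 0 \<and> d1 a = 0)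
   \<and> (\<gamma> \<noteq> (False,True) \<longrightarrow> c2 a = 0 \<and> d2 a = 0) \<and> (\<gamma> \<noteq> (True,True) \<longrightarrow> c3 a = 0 \<and> d3 a = 0)"
  by (cases a) (cases \<gamma>, auto simp: Jg_def gproj_def)

lemma Kset_iff: "k \<in> Kset \<longleftrightarrow> c1 k = 0 \<and> c2 k = 0 \<and> c3 k = 0 \<and> d1 k = 0 \<and> d2 k = 0 \<and> d3 k = 0"
  for k :: "'z::comm_ring_1 J"
proof
  assume "c1 k = 0 \<and> c2 k = 0 \<and> c3 k = 0 \<and> d1 k = 0 \<and> d2 k = 0 \<and> d3 k = 0"
  then have "k = zs (c0 k) one + zs (d0 k) yy" by (simp add: J_eq_iff one_def yy_def)
  then show "k \<in> Kset" unfolding Kset_def by blast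
qed (auto simp: Kset_def one_def yy_def)

lemma homogeneous_even: "a \<in> Jg \<gamma> \<Longrightarrow> a \<in> Jev \<Longrightarrow> a = gproj \<gamma> (evp a)"
  by (cases \<gamma>) (auto simp: Jg_def gproj_def evp_def Jev_iff J_eq_iff split: if_splits)

lemma homogeneous_odd: "a \<in> Jg \<gamma> \<Longrightarrow> a \<in> Jod \<Longrightarrow> a = gproj \<gamma> (odp a)"
  by (cases \<gamma>) (auto simp: Jg_def gproj_def odp_def Jod_iff J_eq_iff split: if_splits)

lemma basis_degrees:
  "zs h one \<in> Jg (False,False)" "bw1 \<in> Jg (True,False)" "bw2 \<in> Jg (False,True)"
  "bw3 \<in> Jg (True,True)" "bx \<in> Jg (False,False)" "bx1 \<in> Jg (True,False)" "bx2 \<in> Jg (False,True)"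
  "bx3 \<in> Jg (True,True)"
  by (simp_all add: Jg_iff basis_defs)

lemma basis_parities:
  "zs h one \<in> Jev" "zs h bw1 \<in> Jev" "bw1 \<in> Jev" "bw2 \<in> Jev" "bw3 \<in> Jev" "one \<in> Jev"
  "bx \<in> Jod" "bx1 \<in> Jod" "bx2 \<in> Jod" "bx3 \<in> Jod" "par bx" "par bx1" "par bx2" "par bx3"
  by (simp_all add: Jev_iff Jod_iff par_def basis_defs)

definition graded :: "bool \<times> bool \<Rightarrow> ('z::zero J \<Rightarrow> 'z J) \<Rightarrow> bool" where
  "graded \<alpha> X \<longleftrightarrow> (\<forall>\<beta>. X ` Jg \<beta> \<subseteq> Jg (gadd \<alpha> \<beta>))"

lemma graded_value_even: "graded \<alpha> X \<Longrightarrow> a \<in> Jg \<beta> \<Longrightarrow> X a \<in> Jev \<Longrightarrow> X a = gproj (gadd \<alpha> \<beta>) (evp (X a))"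
  unfolding graded_def by (blast intro: homogeneous_even)

lemma graded_value_odd: "graded \<alpha> X \<Longrightarrow> a \<in> Jg \<beta> \<Longrightarrow> X a \<in> Jod \<Longrightarrow> X a = gproj (gadd \<alpha> \<beta>) (odp (X a))"
  unfolding graded_def by (blast intro: homogeneous_odd)

section \<open>Superderivations of degree [1,1]\<close>

locale ck_der =
  fixes \<iota> :: "'f::field \<Rightarrow> 'z::comm_ring_1" and \<delta> :: "'z \<Rightarrow> 'z"
  assumes iota_add: "\<And>a b. \<iota> (a + b) = \<iota> a + \<iota> b"
    and iota_one: "\<iota> 1 = 1"
    and char: "(2::'f) \<noteq> 0"
    and der_add: "\<And>f g. \<delta> (f + g) = \<delta> f + \<delta> g"
    and der_smul: "\<And>c f. \<delta> (\<iota> c * f) = \<iota> c * \<delta> f"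
    and der_leibniz: "\<And>f g. \<delta> (f * g) = \<delta> f * g + f * \<delta> g"
begin

(* 2 is invertible in Z, since it is in F. *)
lemma double_eq_zero: "(x::'z) + x = 0 \<Longrightarrow> x = 0"
proof -
  assume x: "x + x = 0"
  have "(1/2) + (1/2) = (1::'f)" using char by (simp add: field_simps)
  then have half: "\<iota> (1/2) + \<iota> (1/2) = 1" by (metis iota_add iota_one)
  have "x = \<iota> (1/2) * (x + x)" by (metis half distrib_left distrib_right mult_1 mult.commute)
  then show ?thesis using x by simp
qed

lemma der_zero: "\<delta> 0 = 0" using der_add[of 0 0] by simp
lemma der_uminus: "\<delta> (- x) = - \<delta> x"
  using der_add[of x "-x"] der_zero minus_unique[of "\<delta> x" "\<delta> (-x)"] by simp
lemma der_diff: "\<delta> (x - y) = \<delta> x - \<delta> y" using der_add[of x "-y"] der_uminus by simp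
lemma der_one: "\<delta> 1 = 0" using der_leibniz[of 1 1] by simp
lemma der_const: "\<delta> (\<iota> c) = 0" using der_smul[of c 1] der_one by simp

lemmas der_simps = der_add der_uminus der_diff der_leibniz der_zero der_one der_const

lemma one_mul: "jmul \<delta> (zs h one) b = zs h b"
  by (simp add: J_eq_iff jmul_sel der_zero one_def algebra_simps)

lemma mul_one: "jmul \<delta> b one = b"
  by (simp add: J_eq_iff jmul_sel der_zero one_def algebra_simps)

lemma basis_products:
  "jmul \<delta> bw1 bw1 = one" "jmul \<delta> bw2 bw2 = one" "jmul \<delta> bw1 bw2 = 0" "jmul \<delta> bw1 bw3 = 0"
  "jmul \<delta> bw1 bx = 0" "jmul \<delta> bw1 bx2 = - bx3" "jmul \<delta> bw2 bx3 = bx1" "jmul \<delta> bw3 bx1 = bx2"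
  "jmul \<delta> bx bx1 = - bw1" "jmul \<delta> bx bx2 = - bw2" "jmul \<delta> bx1 bx = bw1" "jmul \<delta> bx3 bx = bw3"
  "jmul \<delta> bx (zs h bx1) = zs (- h) bw1" "jmul \<delta> (zs h bw1) bx = zs (\<delta> h) bx1"
  by (simp_all add: J_eq_iff jmul_sel basis_defs der_simps)

(* derE f = D(v1, f v2) and derO (sqrt(-1) g) = sqrt(-1) D(v3, g y), see Phi_eq. *)
definition derE :: "'z \<Rightarrow> 'z J \<Rightarrow> 'z J" where
  "derE m c = J 0 (- (m * c2 c)) (m * c1 c) 0 0 (- (m * d2 c)) (m * d1 c) (\<delta> m * d0 c)"

definition derO :: "'z \<Rightarrow> 'z J \<Rightarrow> 'z J" where
  "derO s c = J (s * d3 c) (- (s * d2 c)) (s * d1 c) (\<delta> s * d0 c - s * \<delta> (d0 c)) (s * c3 c)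
     (- (s * \<delta> (c2 c))) (s * \<delta> (c1 c)) (- (s * \<delta> (c0 c)))"

lemma derE_leibniz: "derE m (jmul \<delta> a b) = jmul \<delta> (derE m a) b + jmul \<delta> a (derE m b)"
  by (simp add: derE_def J_eq_iff jmul_sel der_simps algebra_simps)

lemma derO_leibniz_even: "a \<in> Jev \<Longrightarrow> derO s (jmul \<delta> a b) = jmul \<delta> (derO s a) b + jmul \<delta> a (derO s b)"
  by (simp add: Jev_iff derO_def J_eq_iff jmul_sel der_simps algebra_simps)

lemma derO_leibniz_odd: "a \<in> Jod \<Longrightarrow> derO s (jmul \<delta> a b) = jmul \<delta> (derO s a) b - jmul \<delta> a (derO s b)"
  by (simp add: Jod_iff derO_def J_eq_iff jmul_sel der_simps algebra_simps)

lemma sder_derE: "sder \<iota> \<delta> False (derE m)"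
  unfolding sder_def Flin_def
  by (auto simp: derE_leibniz Jev_iff Jod_iff) (simp_all add: derE_def J_eq_iff algebra_simps)

lemma sder_derO: "sder \<iota> \<delta> True (derO s)"
  unfolding sder_def Flin_def
proof (intro conjI allI impI)
  show "derO s (a + b) = derO s a + derO s b" for a b
    by (simp add: derO_def J_eq_iff algebra_simps der_simps)
  show "derO s (zs (\<iota> c) a) = zs (\<iota> c) (derO s a)" for c a
    by (simp add: derO_def J_eq_iff algebra_simps der_simps)
  show "derO s ` Jev \<subseteq> (if True then Jod else Jev)" "derO s ` Jod \<subseteq> (if True then Jev else Jod)"
    by (auto simp: Jev_iff Jod_iff derO_def der_simps)
  show "derO s (jmul \<delta> a b) = jmul \<delta> (derO s a) b +
      (if True \<and> par a then - jmul \<delta> a (derO s b) else jmul \<delta> a (derO s b))"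
    if "a \<in> Jev \<union> Jod" for a b
    using that derO_leibniz_even derO_leibniz_odd by (auto simp: par_def)
qed

lemma derEO_graded: "graded (True,True) (\<lambda>c. derE m c + derO s c)"
proof -
  have "derE m a + derO s a \<in> Jg (gadd (True,True) \<beta>)" if "a \<in> Jg \<beta>" for a \<beta>
    using that unfolding Jg_iff gadd_def by (cases \<beta>) (auto simp: derE_def derO_def der_simps)
  then show ?thesis by (auto simp: graded_def)
qed

lemma sder_additive: "sder \<iota> \<delta> p X \<Longrightarrow> X (a + b) = X a + X b"
  by (simp add: sder_def Flin_def)

lemma sder_zero: "sder \<iota> \<delta> p X \<Longrightarrow> X 0 = 0"
  using sder_additive[of p X 0 0] by simp

lemma sder_uminus: "sder \<iota> \<delta> p X \<Longrightarrow> X (- a) = - X a"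
  using sder_additive[of p X a "- a"] sder_zero[of p X] minus_unique[of "X a" "X (- a)"] by simp

lemma sder_parity:
  "sder \<iota> \<delta> p X \<Longrightarrow> a \<in> Jev \<Longrightarrow> X a \<in> (if p then Jod else Jev)"
  "sder \<iota> \<delta> p X \<Longrightarrow> a \<in> Jod \<Longrightarrow> X a \<in> (if p then Jev else Jod)"
  by (auto simp: sder_def)

lemma sder_leibniz_even:
  "sder \<iota> \<delta> p X \<Longrightarrow> a \<in> Jev \<Longrightarrow> X (jmul \<delta> a b) = jmul \<delta> (X a) b + jmul \<delta> a (X b)"
  by (auto simp: sder_def par_def)

lemma sder_leibniz_odd:
  "sder \<iota> \<delta> p X \<Longrightarrow> a \<in> Jod \<Longrightarrow> par a \<Longrightarrow>
    X (jmul \<delta> a b) = jmul \<delta> (X a) b + (if p then - jmul \<delta> a (X b) else jmul \<delta> a (X b))"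
  by (auto simp: sder_def)

lemma sder_one: "sder \<iota> \<delta> p X \<Longrightarrow> X one = 0"
  using sder_leibniz_even[of p X one one] one_mul[of 1] mul_one[of "X one"]
  by (simp add: basis_parities zs_one)

lemma sder_scalar: "sder \<iota> \<delta> p X \<Longrightarrow> X (zs h b) = jmul \<delta> (X (zs h one)) b + zs h (X b)"
  using sder_leibniz_even[of p X "zs h one" b] by (simp add: basis_parities one_mul)

end

locale even_der11 = ck_der +
  fixes X
  assumes even: "sder \<iota> \<delta> False X" and deg11: "graded (True,True) X"
begin

definition \<mu> where "\<mu> = c2 (X bw1)"

lemma leibniz: "a \<in> Jev \<union> Jod \<Longrightarrow> X (jmul \<delta> a b) = jmul \<delta> (X a) b + jmul \<delta> a (X b)"
  using even unfolding sder_def by auto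

(* Grading and parity leave one unknown coefficient in X a, for a in the basis. *)
lemma value_on_even: "a \<in> Jg \<beta> \<Longrightarrow> a \<in> Jev \<Longrightarrow> X a = gproj (gadd (True,True) \<beta>) (evp (X a))"
  using graded_value_even[OF deg11] sder_parity(1)[OF even] by simp

lemma value_on_odd: "a \<in> Jg \<beta> \<Longrightarrow> a \<in> Jod \<Longrightarrow> X a = gproj (gadd (True,True) \<beta>) (odp (X a))"
  using graded_value_odd[OF deg11] sder_parity(2)[OF even] by simp

lemmas shape_simps = gproj_def gadd_def evp_def odp_def

lemma X_w1: "X bw1 = J 0 0 \<mu> 0 0 0 0 0"
  using value_on_even[OF basis_degrees(2) basis_parities(3)] by (simp add: shape_simps \<mu>_def)

lemma X_w2: "X bw2 = J 0 (- \<mu>) 0 0 0 0 0 0"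
proof -
  obtain \<nu> where \<nu>: "X bw2 = J 0 \<nu> 0 0 0 0 0 0"
    using value_on_even[OF basis_degrees(3) basis_parities(4)] by (simp add: shape_simps)
  have "X (jmul \<delta> bw1 bw2) = jmul \<delta> (X bw1) bw2 + jmul \<delta> bw1 (X bw2)"
    by (simp add: leibniz basis_parities)
  then have "\<mu> + \<nu> = 0"
    by (simp only: basis_products sder_zero[OF even] X_w1 \<nu>) (simp add: J_eq_iff jmul_sel basis_defs der_simps)
  with \<nu> show ?thesis by (simp add: eq_neg_iff_add_eq_0 add.commute)
qed

lemma X_w3: "X bw3 = 0"
proof -
  obtain \<gamma> where \<gamma>: "X bw3 = J \<gamma> 0 0 0 0 0 0 0"
    using value_on_even[OF basis_degrees(4) basis_parities(5)] by (simp add: shape_simps)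
  have "X (jmul \<delta> bw1 bw3) = jmul \<delta> (X bw1) bw3 + jmul \<delta> bw1 (X bw3)"
    by (simp add: leibniz basis_parities)
  then have "\<gamma> = 0"
    by (simp only: basis_products sder_zero[OF even] X_w1 \<gamma>) (simp add: J_eq_iff jmul_sel basis_defs der_simps)
  with \<gamma> show ?thesis by (simp add: J_eq_iff)
qed

lemma X_x: "X bx = J 0 0 0 0 0 0 0 (\<delta> \<mu>)"
proof -
  obtain \<xi> where \<xi>: "X bx = J 0 0 0 0 0 0 0 \<xi>"
    using value_on_odd[OF basis_degrees(5) basis_parities(7)] by (simp add: shape_simps)
  have "X (jmul \<delta> bw1 bx) = jmul \<delta> (X bw1) bx + jmul \<delta> bw1 (X bx)"
    by (simp add: leibniz basis_parities)
  then have "\<xi> = \<delta> \<mu>"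
    by (simp only: basis_products sder_zero[OF even] X_w1 \<xi>) (simp add: J_eq_iff jmul_sel basis_defs der_simps)
  with \<xi> show ?thesis by simp
qed

lemma X_x1: "X bx1 = J 0 0 0 0 0 0 \<mu> 0"
proof -
  obtain \<kappa> where \<kappa>: "X bx1 = J 0 0 0 0 0 0 \<kappa> 0"
    using value_on_odd[OF basis_degrees(6) basis_parities(8)] by (simp add: shape_simps)
  have "X (jmul \<delta> bx bx1) = jmul \<delta> (X bx) bx1 + jmul \<delta> bx (X bx1)"
    by (simp add: leibniz basis_parities)
  then have "\<kappa> = \<mu>"
    by (simp only: basis_products sder_uminus[OF even] X_w1 X_x \<kappa>) (simp add: J_eq_iff jmul_sel basis_defs der_simps)
  with \<kappa> show ?thesis by simp
qed

lemma X_x2: "X bx2 = J 0 0 0 0 0 (- \<mu>) 0 0"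
proof -
  obtain \<kappa> where \<kappa>: "X bx2 = J 0 0 0 0 0 \<kappa> 0 0"
    using value_on_odd[OF basis_degrees(7) basis_parities(9)] by (simp add: shape_simps)
  have "X (jmul \<delta> bx bx2) = jmul \<delta> (X bx) bx2 + jmul \<delta> bx (X bx2)"
    by (simp add: leibniz basis_parities)
  then have "\<kappa> = - \<mu>"
    by (simp only: basis_products sder_uminus[OF even] X_w2 X_x \<kappa>) (simp add: J_eq_iff jmul_sel basis_defs der_simps)
  with \<kappa> show ?thesis by simp
qed

lemma X_x3: "X bx3 = 0"
proof -
  obtain \<epsilon> where \<epsilon>: "X bx3 = J 0 0 0 0 \<epsilon> 0 0 0"
    using value_on_odd[OF basis_degrees(8) basis_parities(10)] by (simp add: shape_simps)
  have "X (jmul \<delta> bw1 bx2) = jmul \<delta> (X bw1) bx2 + jmul \<delta> bw1 (X bx2)"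
    by (simp add: leibniz basis_parities)
  then have "\<epsilon> = 0"
    by (simp only: basis_products sder_uminus[OF even] X_w1 X_x2 \<epsilon>) (simp add: J_eq_iff jmul_sel basis_defs der_simps)
  with \<epsilon> show ?thesis by (simp add: J_eq_iff)
qed

(* X vanishes on Z 1, hence is Z-linear: use x (h x1) = - h w1. *)
lemma X_scalar: "X (zs h b) = zs h (X b)"
proof -
  define \<alpha> where "\<alpha> h = c3 (X (zs h one))" for h
  have \<alpha>: "X (zs h one) = J 0 0 0 (\<alpha> h) 0 0 0 0" for h
    using value_on_even[OF basis_degrees(1) basis_parities(1)] by (simp add: shape_simps \<alpha>_def)
  have "X (jmul \<delta> bx (zs h bx1)) = jmul \<delta> (X bx) (zs h bx1) + jmul \<delta> bx (X (zs h bx1))"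
    by (simp add: leibniz basis_parities)
  then have "\<alpha> h = 0"
    by (simp only: basis_products sder_scalar[OF even, of "- h" bw1] sder_scalar[OF even, of h bx1] \<alpha> X_w1 X_x X_x1)
      (simp add: J_eq_iff jmul_sel basis_defs der_simps)
  then have "X (zs h one) = 0" using \<alpha> by (simp add: J_eq_iff)
  then show ?thesis
    using sder_scalar[OF even, of h b] by (simp add: J_eq_iff jmul_sel der_simps)
qed

theorem classification: "X = derE \<mu>"
proof
  fix c
  have "X c = X (zs (c0 c) one + zs (c1 c) bw1 + zs (c2 c) bw2 + zs (c3 c) bw3
      + zs (d0 c) bx + zs (d1 c) bx1 + zs (d2 c) bx2 + zs (d3 c) bx3)"
    using J_decomp[of c] by simp
  also have "\<dots> = derE \<mu> c"
    by (simp only: sder_additive[OF even] X_scalar sder_one[OF even] X_w1 X_w2 X_w3 X_x X_x1 X_x2 X_x3)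
      (simp add: derE_def J_eq_iff)
  finally show "X c = derE \<mu> c" .
qed

end

locale odd_der11 = ck_der +
  fixes X
  assumes odd: "sder \<iota> \<delta> True X" and deg11: "graded (True,True) X"
begin

definition \<eta> where "\<eta> = c0 (X bx3)"

lemma leibniz_even: "a \<in> Jev \<Longrightarrow> X (jmul \<delta> a b) = jmul \<delta> (X a) b + jmul \<delta> a (X b)"
  using sder_leibniz_even[OF odd] .

lemma leibniz_odd: "a \<in> Jod \<Longrightarrow> par a \<Longrightarrow> X (jmul \<delta> a b) = jmul \<delta> (X a) b - jmul \<delta> a (X b)"
  using sder_leibniz_odd[OF odd] by simp

lemma value_on_even: "a \<in> Jg \<beta> \<Longrightarrow> a \<in> Jev \<Longrightarrow> X a = gproj (gadd (True,True) \<beta>) (odp (X a))"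
  using graded_value_odd[OF deg11] sder_parity(1)[OF odd] by simp

lemma value_on_odd: "a \<in> Jg \<beta> \<Longrightarrow> a \<in> Jod \<Longrightarrow> X a = gproj (gadd (True,True) \<beta>) (evp (X a))"
  using graded_value_even[OF deg11] sder_parity(2)[OF odd] by simp

lemmas shape_simps = gproj_def gadd_def evp_def odp_def

lemma X_x3: "X bx3 = J \<eta> 0 0 0 0 0 0 0"
  using value_on_odd[OF basis_degrees(8) basis_parities(10)] by (simp add: shape_simps \<eta>_def)

(* From w1 w1 = 1; here char F /= 2 is used. *)
lemma X_w1: "X bw1 = 0"
proof -
  obtain \<pi> where \<pi>: "X bw1 = J 0 0 0 0 0 0 \<pi> 0"
    using value_on_even[OF basis_degrees(2) basis_parities(3)] by (simp add: shape_simps)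
  have "X (jmul \<delta> bw1 bw1) = jmul \<delta> (X bw1) bw1 + jmul \<delta> bw1 (X bw1)"
    by (simp add: leibniz_even basis_parities)
  then have "\<pi> + \<pi> = 0"
    by (simp only: basis_products sder_one[OF odd] \<pi>) (simp add: J_eq_iff jmul_sel basis_defs der_simps)
  with \<pi> show ?thesis by (simp add: double_eq_zero J_eq_iff)
qed

lemma X_w2: "X bw2 = 0"
proof -
  obtain \<pi> where \<pi>: "X bw2 = J 0 0 0 0 0 \<pi> 0 0"
    using value_on_even[OF basis_degrees(3) basis_parities(4)] by (simp add: shape_simps)
  have "X (jmul \<delta> bw2 bw2) = jmul \<delta> (X bw2) bw2 + jmul \<delta> bw2 (X bw2)"
    by (simp add: leibniz_even basis_parities)
  then have "\<pi> + \<pi> = 0"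
    by (simp only: basis_products sder_one[OF odd] \<pi>) (simp add: J_eq_iff jmul_sel basis_defs der_simps)
  with \<pi> show ?thesis by (simp add: double_eq_zero J_eq_iff)
qed

lemma X_x1: "X bx1 = J 0 0 \<eta> 0 0 0 0 0"
proof -
  obtain \<theta> where \<theta>: "X bx1 = J 0 0 \<theta> 0 0 0 0 0"
    using value_on_odd[OF basis_degrees(6) basis_parities(8)] by (simp add: shape_simps)
  have "X (jmul \<delta> bw2 bx3) = jmul \<delta> (X bw2) bx3 + jmul \<delta> bw2 (X bx3)"
    by (simp add: leibniz_even basis_parities)
  then have "\<theta> = \<eta>"
    by (simp only: basis_products X_w2 X_x3 \<theta>) (simp add: J_eq_iff jmul_sel basis_defs der_simps)
  with \<theta> show ?thesis by simp
qed

lemma X_w3: "X bw3 = J 0 0 0 0 \<eta> 0 0 0"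
proof -
  obtain \<zeta> where \<zeta>: "X bw3 = J 0 0 0 0 \<zeta> 0 0 0"
    using value_on_even[OF basis_degrees(4) basis_parities(5)] by (simp add: shape_simps)
  obtain \<sigma> where \<sigma>: "X bx = J 0 0 0 \<sigma> 0 0 0 0"
    using value_on_odd[OF basis_degrees(5) basis_parities(7)] by (simp add: shape_simps)
  have "X (jmul \<delta> bx3 bx) = jmul \<delta> (X bx3) bx - jmul \<delta> bx3 (X bx)"
    by (simp add: leibniz_odd basis_parities)
  then have "\<zeta> = \<eta>"
    by (simp only: basis_products X_x3 \<zeta> \<sigma>) (simp add: J_eq_iff jmul_sel basis_defs der_simps)
  with \<zeta> show ?thesis by simp
qed

lemma X_x2: "X bx2 = J 0 (- \<eta>) 0 0 0 0 0 0"
proof -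
  obtain \<theta> where \<theta>: "X bx2 = J 0 \<theta> 0 0 0 0 0 0"
    using value_on_odd[OF basis_degrees(7) basis_parities(9)] by (simp add: shape_simps)
  have "X (jmul \<delta> bw3 bx1) = jmul \<delta> (X bw3) bx1 + jmul \<delta> bw3 (X bx1)"
    by (simp add: leibniz_even basis_parities)
  then have "\<theta> = - \<eta>"
    by (simp only: basis_products X_w3 X_x1 \<theta>) (simp add: J_eq_iff jmul_sel basis_defs der_simps)
  with \<theta> show ?thesis by simp
qed

lemma X_x: "X bx = J 0 0 0 (\<delta> \<eta>) 0 0 0 0"
proof -
  obtain \<sigma> where \<sigma>: "X bx = J 0 0 0 \<sigma> 0 0 0 0"
    using value_on_odd[OF basis_degrees(5) basis_parities(7)] by (simp add: shape_simps)
  have "X (jmul \<delta> bx1 bx) = jmul \<delta> (X bx1) bx - jmul \<delta> bx1 (X bx)"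
    by (simp add: leibniz_odd basis_parities)
  then have "\<sigma> = \<delta> \<eta>"
    by (simp only: basis_products X_w1 X_x1 \<sigma>) (simp add: J_eq_iff jmul_sel basis_defs der_simps)
  with \<sigma> show ?thesis by simp
qed

lemma X_unit: "X (zs h one) = J 0 0 0 0 0 0 0 (- (\<eta> * \<delta> h))"
proof -
  define \<beta> where "\<beta> h = d3 (X (zs h one))" for h
  have \<beta>: "X (zs h one) = J 0 0 0 0 0 0 0 (\<beta> h)" for h
    using value_on_even[OF basis_degrees(1) basis_parities(1)] by (simp add: shape_simps \<beta>_def)
  have "X (jmul \<delta> (zs h bw1) bx) = jmul \<delta> (X (zs h bw1)) bx + jmul \<delta> (zs h bw1) (X bx)"
    by (simp add: leibniz_even basis_parities)
  then have "\<beta> h = - (\<eta> * \<delta> h)"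
    by (simp only: basis_products sder_scalar[OF odd, of "\<delta> h" bx1] sder_scalar[OF odd, of h bw1]
        \<beta> X_w1 X_x X_x1) (simp add: J_eq_iff jmul_sel basis_defs der_simps algebra_simps)
  with \<beta> show ?thesis by simp
qed

lemma X_scalar: "X (zs h b) = jmul \<delta> (J 0 0 0 0 0 0 0 (- (\<eta> * \<delta> h))) b + zs h (X b)"
  using sder_scalar[OF odd, of h b] by (simp add: X_unit)

theorem classification: "X = derO \<eta>"
proof
  fix c
  have "X c = X (zs (c0 c) one + zs (c1 c) bw1 + zs (c2 c) bw2 + zs (c3 c) bw3
      + zs (d0 c) bx + zs (d1 c) bx1 + zs (d2 c) bx2 + zs (d3 c) bx3)"
    using J_decomp[of c] by simp
  also have "\<dots> = derO \<eta> c"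
    by (simp only: sder_additive[OF odd] X_scalar sder_one[OF odd] X_w1 X_w2 X_w3 X_x X_x1 X_x2 X_x3)
      (simp add: derO_def J_eq_iff jmul_sel basis_defs der_simps algebra_simps)
  finally show "X c = derO \<eta> c" .
qed

end

context ck_der
begin

(* The even and odd parts of a graded derivation are graded of the same degree, because
   the homogeneous components Jg beta are spanned by their even and odd coordinates. *)
lemma graded_split:
  assumes s0: "sder \<iota> \<delta> False X0" and s1: "sder \<iota> \<delta> True X1"
    and gr: "graded \<gamma> (\<lambda>a. X0 a + X1 a)"
  shows "graded \<gamma> X0" "graded \<gamma> X1"
proof -
  have separate: "u \<in> Jg g \<and> v \<in> Jg g"
    if "u + v \<in> Jg g" "u \<in> Jev \<and> v \<in> Jod \<or> u \<in> Jod \<and> v \<in> Jev" for u v :: "'z J" and g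
    using that by (auto simp: Jg_iff Jev_iff Jod_iff)
  have both: "X0 a \<in> Jg (gadd \<gamma> \<beta>) \<and> X1 a \<in> Jg (gadd \<gamma> \<beta>)" if a: "a \<in> Jg \<beta>" for a \<beta>
  proof -
    have split: "a = evp a + odp a" by (simp add: J_eq_iff evp_def odp_def)
    have parts: "evp a \<in> Jg \<beta>" "evp a \<in> Jev" "odp a \<in> Jg \<beta>" "odp a \<in> Jod"
      using a by (simp_all add: Jg_iff Jev_iff Jod_iff evp_def odp_def)
    have "X0 (evp a) + X1 (evp a) \<in> Jg (gadd \<gamma> \<beta>)" "X0 (odp a) + X1 (odp a) \<in> Jg (gadd \<gamma> \<beta>)"
      using gr parts unfolding graded_def by blast+
    then have "X0 (evp a) \<in> Jg (gadd \<gamma> \<beta>)" "X1 (evp a) \<in> Jg (gadd \<gamma> \<beta>)"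
         "X0 (odp a) \<in> Jg (gadd \<gamma> \<beta>)" "X1 (odp a) \<in> Jg (gadd \<gamma> \<beta>)"
      using separate sder_parity[OF s0] sder_parity[OF s1] parts by (metis (full_types))+
    then show ?thesis
      by (subst (1 2) split) (simp add: sder_additive[OF s0] sder_additive[OF s1] Jg_iff)
  qed
  then show "graded \<gamma> X0" "graded \<gamma> X1" by (auto simp: graded_def)
qed

theorem Aset_char: "X \<in> Aset \<iota> \<delta> \<longleftrightarrow> (\<exists>m s. X = (\<lambda>c. derE m c + derO s c))"
proof
  assume "X \<in> Aset \<iota> \<delta>"
  then obtain X0 X1 where s0: "sder \<iota> \<delta> False X0" and s1: "sder \<iota> \<delta> True X1"
    and X: "X = (\<lambda>a. X0 a + X1 a)" and gr: "graded (True,True) X"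
    unfolding Aset_def DerG_def Der_def graded_def by blast
  have "even_der11 \<iota> \<delta> X0" "odd_der11 \<iota> \<delta> X1"
    using graded_split[OF s0 s1] gr X s0 s1 by unfold_locales auto
  then have "X0 = derE (even_der11.\<mu> X0)" "X1 = derO (odd_der11.\<eta> X1)"
    using even_der11.classification odd_der11.classification by blast+
  then show "\<exists>m s. X = (\<lambda>c. derE m c + derO s c)" using X by metis
next
  assume "\<exists>m s. X = (\<lambda>c. derE m c + derO s c)"
  then obtain m s where X: "X = (\<lambda>c. derE m c + derO s c)" by blast
  have "X \<in> Der \<iota> \<delta>" unfolding Der_def using sder_derE sder_derO X by blast
  then show "X \<in> Aset \<iota> \<delta>" using derEO_graded X by (simp add: Aset_def DerG_def graded_def)
qed

end

section \<open>The S_4-action and the isomorphism K = A\<close>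

locale ck = ck_der \<iota> \<delta> for \<iota> :: "'f::field \<Rightarrow> 'z::comm_ring_1" and \<delta> +
  fixes i :: 'f
  assumes iota_mult: "\<And>a b. \<iota> (a * b) = \<iota> a * \<iota> b"
    and sqrt_m1: "i * i = -1"
begin

abbreviation I where "I \<equiv> \<iota> i"

lemma I_squared: "I * I = -1"
proof -
  have "\<iota> 0 = 0" using iota_add[of 0 0] by simp
  then have "\<iota> (-1) = -1" using iota_add[of 1 "-1"] iota_one by (simp add: eq_neg_iff_add_eq_0 add.commute)
  then show ?thesis by (metis iota_mult sqrt_m1)
qed

lemma I_squared': "I * (I * x) = - x"
  by (metis I_squared mult.assoc mult_minus1)

(* phi = (1 2 3) and tau = (1 2) in coordinates w.r.t. the basis 1, w1, w2, w3, x, x1, x2, x3. *)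
lemma phi_eq: "phi \<iota> i a = J (c0 a) (I * c3 a) (c1 a) (- (I * c2 a)) (d0 a) (I * d3 a) (d1 a) (- (I * d2 a))"
  by (simp add: phi_def J_eq_iff one_def yy_def v1_def v2_def v3_def y1_def y2_def y3_def
      algebra_simps I_squared I_squared')

lemma tau_eq: "tau \<iota> i a = J (c0 a) (- c2 a) (- c1 a) (- c3 a) (d0 a) (- d2 a) (- d1 a) (- d3 a)"
  by (simp add: tau_def J_eq_iff one_def yy_def v1_def v2_def v3_def y1_def y2_def y3_def
      algebra_simps I_squared I_squared')

lemma inv_tau: "inv (tau \<iota> i) = tau \<iota> i"
  by (rule inv_unique_comp) (auto simp: tau_eq J_eq_iff)

lemma inv_phi: "inv (phi \<iota> i) = phi \<iota> i \<circ> phi \<iota> i" "inv (phi \<iota> i \<circ> phi \<iota> i) = phi \<iota> i"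
  by (rule inv_unique_comp; auto simp: phi_eq J_eq_iff I_squared')+

lemma Abar_derEO: "Abar \<iota> i (\<lambda>c. derE m c + derO s c) = (\<lambda>c. derE m c + derO s c)"
  by (rule ext) (simp add: Abar_def conj_def inv_tau tau_eq derE_def derO_def J_eq_iff der_simps)

(* The product of A on the normal form: (f + g y)(f' + g' y) = f f' + delta(g) g' - g delta(g')
   + (f g' + f' g) y, written for m = f and s = I g (note delta(I g) = I delta(g), I I = -1). *)
lemma Amul_derEO: "Amul \<iota> i (\<lambda>c. derE m1 c + derO s1 c) (\<lambda>c. derE m2 c + derO s2 c)
   = (\<lambda>c. derE (m1 * m2 - \<delta> s1 * s2 + s1 * \<delta> s2) c + derO (m1 * s2 + m2 * s1) c)"
  by (rule ext) (simp add: Amul_def conj_def inv_tau inv_phi scom_def evm_def odm_def evp_def odp_def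
      phi_eq tau_eq derE_def derO_def J_eq_iff der_simps algebra_simps I_squared I_squared')

lemma Phi_eq: "Phi \<iota> \<delta> i k = (\<lambda>c. derE (c0 k) c + derO (I * d0 k) c)"
proof
  have not_par: "\<not> par (v1 \<iota> i)" "\<not> par v3"
    by (simp_all add: par_def Jev_iff v1_def v3_def)
  show "Phi \<iota> \<delta> i k c = derE (c0 k) c + derO (I * d0 k) c" for c
    by (simp only: Phi_def Dop_def not_par simp_thms if_False)
      (simp add: J_eq_iff derE_def derO_def jmul_sel v1_def v2_def v3_def yy_def
        algebra_simps I_squared I_squared' der_simps der_smul)
qed

(* Phi k is read off from its values at w1 and x3. *)
lemma Phi_values: "Phi \<iota> \<delta> i k bw1 = J 0 0 (c0 k) 0 0 0 0 0" "Phi \<iota> \<delta> i k bx3 = J (I * d0 k) 0 0 0 0 0 0 0"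
  by (simp_all add: Phi_eq derE_def derO_def basis_defs der_simps zero_J_def)

lemma I_cancel: "I * a = I * b \<Longrightarrow> a = b"
  by (metis I_squared' minus_equation_iff)

lemma Phi_in_A: "Phi \<iota> \<delta> i k \<in> Aset \<iota> \<delta>"
  unfolding Aset_char Phi_eq by blast

lemma Phi_bij: "bij_betw (Phi \<iota> \<delta> i) Kset (Aset \<iota> \<delta>)"
  unfolding bij_betw_def
proof
  show "inj_on (Phi \<iota> \<delta> i) Kset"
  proof (rule inj_onI)
    fix a b assume "a \<in> Kset" "b \<in> Kset" and "Phi \<iota> \<delta> i a = Phi \<iota> \<delta> i b"
    moreover from this have "c0 a = c0 b" "d0 a = d0 b"
      by (metis Phi_values J.inject I_cancel)+
    ultimately show "a = b" by (simp add: Kset_iff J_eq_iff)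
  qed
  have "X \<in> Phi \<iota> \<delta> i ` Kset" if "X \<in> Aset \<iota> \<delta>" for X
  proof -
    obtain m s where X: "X = (\<lambda>c. derE m c + derO s c)" using \<open>X \<in> Aset \<iota> \<delta>\<close> Aset_char by blast
    let ?k = "zs m one + zs (- (I * s)) yy"
    have "?k \<in> Kset" "X = Phi \<iota> \<delta> i ?k"
      by (simp_all add: Kset_iff X Phi_eq one_def yy_def I_squared')
    then show ?thesis by blast
  qed
  then show "Phi \<iota> \<delta> i ` Kset = Aset \<iota> \<delta>" using Phi_in_A by blast
qed

lemma Phi_add: "Phi \<iota> \<delta> i (a + b) = (\<lambda>c. Phi \<iota> \<delta> i a c + Phi \<iota> \<delta> i b c)"
  unfolding Phi_eq by (rule ext) (simp add: derE_def derO_def J_eq_iff der_simps algebra_simps)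

lemma Phi_smul: "Phi \<iota> \<delta> i (zs (\<iota> r) a) = (\<lambda>c. zs (\<iota> r) (Phi \<iota> \<delta> i a c))"
  unfolding Phi_eq by (rule ext) (simp add: derE_def derO_def J_eq_iff der_simps der_smul algebra_simps)

lemma Phi_mult:
  assumes "a \<in> Kset" "b \<in> Kset"
  shows "Phi \<iota> \<delta> i (jmul \<delta> a b) = Amul \<iota> i (Phi \<iota> \<delta> i a) (Phi \<iota> \<delta> i b)"
proof -
  have "c0 (jmul \<delta> a b) = c0 a * c0 b - \<delta> (I * d0 a) * (I * d0 b) + (I * d0 a) * \<delta> (I * d0 b)"
       "I * d0 (jmul \<delta> a b) = c0 a * (I * d0 b) + c0 b * (I * d0 a)"
    using assms by (simp_all add: Kset_iff jmul_sel der_simps der_smul algebra_simps I_squared I_squared')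
  then show ?thesis unfolding Phi_eq Amul_derEO by simp
qed

lemma Phi_even: "Phi \<iota> \<delta> i ` (Kset \<inter> Jev) = {X \<in> Aset \<iota> \<delta>. sder \<iota> \<delta> False X}"
proof (intro equalityI subsetI)
  fix X assume "X \<in> Phi \<iota> \<delta> i ` (Kset \<inter> Jev)"
  then obtain k where "k \<in> Jev" and X: "X = Phi \<iota> \<delta> i k" by blast
  then have "X = derE (c0 k)" by (auto simp: Phi_eq Jev_iff derO_def der_simps J_eq_iff)
  then show "X \<in> {X \<in> Aset \<iota> \<delta>. sder \<iota> \<delta> False X}" using Phi_in_A[of k] X sder_derE by simp
next
  fix X assume X: "X \<in> {X \<in> Aset \<iota> \<delta>. sder \<iota> \<delta> False X}"
  then obtain k where k: "k \<in> Kset" and Xk: "X = Phi \<iota> \<delta> i k" using Phi_bij by (auto simp: bij_betw_def)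
  have "X bx3 \<in> Jod" using X sder_parity(2) basis_parities(10) by fastforce
  then have "I * d0 k = I * 0" unfolding Xk Phi_values by (simp add: Jod_iff)
  then have "k \<in> Jev" using k I_cancel by (simp add: Kset_iff Jev_iff)
  then show "X \<in> Phi \<iota> \<delta> i ` (Kset \<inter> Jev)" using k Xk by blast
qed

lemma Phi_odd: "Phi \<iota> \<delta> i ` (Kset \<inter> Jod) = {X \<in> Aset \<iota> \<delta>. sder \<iota> \<delta> True X}"
proof (intro equalityI subsetI)
  fix X assume "X \<in> Phi \<iota> \<delta> i ` (Kset \<inter> Jod)"
  then obtain k where "k \<in> Jod" and X: "X = Phi \<iota> \<delta> i k" by blast
  then have "X = derO (I * d0 k)" by (auto simp: Phi_eq Jod_iff derE_def der_simps J_eq_iff)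
  then show "X \<in> {X \<in> Aset \<iota> \<delta>. sder \<iota> \<delta> True X}" using Phi_in_A[of k] X sder_derO by simp
next
  fix X assume X: "X \<in> {X \<in> Aset \<iota> \<delta>. sder \<iota> \<delta> True X}"
  then obtain k where k: "k \<in> Kset" and Xk: "X = Phi \<iota> \<delta> i k" using Phi_bij by (auto simp: bij_betw_def)
  have "X bw1 \<in> Jod" using X sder_parity(1) basis_parities(3) by fastforce
  then have "c0 k = 0" unfolding Xk Phi_values by (simp add: Jod_iff)
  then have "k \<in> Jod" using k by (simp add: Kset_iff Jod_iff)
  then show "X \<in> Phi \<iota> \<delta> i ` (Kset \<inter> Jod)" using k Xk by blast
qed

lemma Abar_trivial: "X \<in> Aset \<iota> \<delta> \<Longrightarrow> Abar \<iota> i X = X"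
  using Abar_derEO Aset_char by metis

end

theorem theorem6p1:
  fixes \<iota> :: "'f::field \<Rightarrow> 'z::comm_ring_1" and \<delta> :: "'z \<Rightarrow> 'z" and i :: 'f
  assumes iota_add: "\<And>a b. \<iota> (a + b) = \<iota> a + \<iota> b"
    and iota_mult: "\<And>a b. \<iota> (a * b) = \<iota> a * \<iota> b"
    and iota_one: "\<iota> 1 = 1"
    and char: "(2::'f) \<noteq> 0"
    and sqrt_m1: "i * i = -1"
    and der_add: "\<And>f g. \<delta> (f + g) = \<delta> f + \<delta> g"
    and der_smul: "\<And>c f. \<delta> (\<iota> c * f) = \<iota> c * \<delta> f"
    and der_leibniz: "\<And>f g. \<delta> (f * g) = \<delta> f * g + f * \<delta> g"
    and span: "\<And>z. \<exists>n (c :: nat \<Rightarrow> 'f) f g. z = (\<Sum>k<n. \<iota> (c k) * f k * \<delta> (g k))"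
  shows "(\<forall>X \<in> Aset \<iota> \<delta>. Abar \<iota> i X = X)
    \<and> bij_betw (Phi \<iota> \<delta> i) Kset (Aset \<iota> \<delta>)
    \<and> (\<forall>a \<in> Kset. \<forall>b \<in> Kset. Phi \<iota> \<delta> i (a + b) = (\<lambda>c. Phi \<iota> \<delta> i a c + Phi \<iota> \<delta> i b c))
    \<and> (\<forall>r. \<forall>a \<in> Kset. Phi \<iota> \<delta> i (zs (\<iota> r) a) = (\<lambda>c. zs (\<iota> r) (Phi \<iota> \<delta> i a c)))
    \<and> (\<forall>a \<in> Kset. \<forall>b \<in> Kset. Phi \<iota> \<delta> i (jmul \<delta> a b) = Amul \<iota> i (Phi \<iota> \<delta> i a) (Phi \<iota> \<delta> i b))
    \<and> Phi \<iota> \<delta> i ` (Kset \<inter> Jev) = {X \<in> Aset \<iota> \<delta>. sder \<iota> \<delta> False X}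
    \<and> Phi \<iota> \<delta> i ` (Kset \<inter> Jod) = {X \<in> Aset \<iota> \<delta>. sder \<iota> \<delta> True X}"
proof -
  interpret ck \<iota> \<delta> i
    by unfold_locales (fact iota_add iota_one char der_add der_smul der_leibniz iota_mult sqrt_m1)+
  show ?thesis
    using Abar_trivial Phi_bij Phi_add Phi_smul Phi_mult Phi_even Phi_odd by blast
qed

end
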